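(* There is an absolute constant $c>0$ such that the following holds. Let $G=K_n$ with $n\ge 2$, let $F$ be a regular distribution, and let $p=F^{-1}(1-1/n)\cdot(1-1/n)^{n-1}$. Then $$\inf_{\mathbf{T}\in\mathcal{N}_{p\cdot\mathbf{1}}}\mathcal{R}(p\cdot\mathbf{1},\mathbf{T})\ \ge\ c\cdot\sup_{\mathbf{p}'\in(0,\infty)^n}\ \sup_{\mathbf{T}\in\mathcal{N}_{\mathbf{p}'}}\mathcal{R}(\mathbf{p}',\mathbf{T}),$$ i.e. the worst equilibrium revenue at the uniform price $p$ is a constant fraction of the best equilibrium revenue over all (possibly non-uniform) price vectors.
   Context: Public-goods pricing game: $n$ buyers are the vertices of an undirected graph $G=([n],E)$, here the complete graph $K_n$; $N(i)=\{j:(i,j)\in E\}$ (so $i\notin N(i)$). Values $v_i$ are i.i.d. with cumulative distribution function $F$ on $[0,\infty)$, $F(\infty)=1$. An equilibrium for price vector $\mathbf{p}$ is a threshold vector $\mathbf{T}\in[0,\infty]^n$ (buyer $i$ purchases iff $v_i\ge T_i$) with $T_i=p_i/\prod_{j\in N(i)}F(T_j)$ for all $i$ (convention $c/0=\infty$); $\mathcal{N}_{\mathbf{p}}$ is the set of equilibria; $\mathcal{R}(\mathbf{p},\mathbf{T})=\sum_ip_i(1-F(T_i))$; $p\cdot\mathbf{1}$ is the uniform price vector. $F$ is regular: it is atomless, supported on an interval in $[0,\infty)$ with a density $f$ positive there, and the virtual value $\phi(x)=x-\frac{1-F(x)}{f(x)}$ is non-decreasing. $F^{-1}(q)=\min\{x: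 F(x)=q\}$. *)

theory Defs
  imports "HOL-Analysis.Analysis"
begin

text \<open>Buyers are 0,...,n-1; the graph is the complete graph K_n, so N(i) = {j < n. j \<noteq> i}.\<close>

definition nbrs :: "nat \<Rightarrow> nat \<Rightarrow> nat set" where
  "nbrs n i = {j. j < n \<and> j \<noteq> i}"

definition Fe :: "(real \<Rightarrow> real) \<Rightarrow> ereal \<Rightarrow> real" where
  "Fe F t = (if t = \<infinity> then 1 else F (real_of_ereal t))"

definition virtual_value :: "(real \<Rightarrow> real) \<Rightarrow> (real \<Rightarrow> real) \<Rightarrow> real \<Rightarrow> real" where
  "virtual_value F f x = x - (1 - F x) / f x"

definition regular :: "(real \<Rightarrow> real) \<Rightarrow> bool" where
  "regular F \<longleftrightarrow> mono F \<and> continuous_on UNIV F \<and> (F \<longlongrightarrow> 1) at_top \<and>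
     (\<exists>f a (b::ereal). 0 \<le> a \<and> ereal a < b \<and>
        (\<forall>x. x \<le> a \<longrightarrow> F x = 0) \<and>
        (\<forall>x. b \<le> ereal x \<longrightarrow> F x = 1) \<and>
        (\<forall>x. a < x \<and> ereal x < b \<longrightarrow> (F has_real_derivative f x) (at x) \<and> f x > 0) \<and>
        (\<forall>x y. a < x \<and> x \<le> y \<and> ereal y < b \<longrightarrow> virtual_value F f x \<le> virtual_value F f y))"

definition Finv :: "(real \<Rightarrow> real) \<Rightarrow> real \<Rightarrow> real" where
  "Finv F q = (LEAST x. F x = q)"

definition equilibria :: "nat \<Rightarrow> (real \<Rightarrow> real) \<Rightarrow> (nat \<Rightarrow> real) \<Rightarrow> (nat \<Rightarrow> ereal) set" where
  "equilibria n F p = {T. \<forall>i<n. 0 \<le> T i \<and>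
      T i = (let d = (\<Prod>j\<in>nbrs n i. Fe F (T j)) in
             if d = 0 then \<infinity> else ereal (p i / d))}"

definition revenue :: "nat \<Rightarrow> (real \<Rightarrow> real) \<Rightarrow> (nat \<Rightarrow> real) \<Rightarrow> (nat \<Rightarrow> ereal) \<Rightarrow> real" where
  "revenue n F p T = (\<Sum>i<n. p i * (1 - Fe F (T i)))"

end

theory Submission imports Defs begin

text \<open>Let \<open>x = F\<^sup>-\<^sup>1(1 - 1/n)\<close> and \<open>k = (1 - 1/n)\<^sup>n\<^sup>-\<^sup>1 \<in> [1/3, 1/2]\<close>, so \<open>p = k x\<close>.
  Lower bound: if the buyers' purchase probabilities \<open>1 - q\<^sub>i\<close> summed to less than 1/2, every
  buyer would face a neighbour product above 1/2, hence a threshold below \<open>2p \<le> x\<close>, hence purchase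
  probability at least \<open>1/n\<close>, summing to at least 1. So every equilibrium at price \<open>p\<close> earns
  at least \<open>p/2 \<ge> x/6\<close>.
  Upper bound: buyer \<open>i\<close> with threshold \<open>t\<close> contributes \<open>t (1 - F t) D\<^sub>i\<close>, where \<open>D\<^sub>i\<close> is the
  neighbour product. For \<open>t \<le> x\<close> this is at most \<open>x (1 - q\<^sub>i) D\<^sub>i\<close>, and these terms sum to at most the probability
  that not everybody abstains. For \<open>t > x\<close>, regularity (concavity of revenue in quantile space)
  gives \<open>t (1 - F t) \<le> 2 x (1 - F x) = 2x/n\<close>. Altogether any equilibrium earns at most \<open>3x\<close>,
  and \<open>c = 1/18\<close> works.\<close>

lemma one_minus_sum_le_prod:
  fixes q :: "'a \<Rightarrow> real"
  assumes "finite A" "\<And>i. i \<in> A \<Longrightarrow> 0 \<le> q i \<and> q i \<le> 1"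
  shows "1 - (\<Sum>i\<in>A. 1 - q i) \<le> (\<Prod>i\<in>A. q i)"
  using assms
proof (induction A rule: finite_induct)
  case (insert k A)
  have IH: "1 - (\<Sum>i\<in>A. 1 - q i) \<le> (\<Prod>i\<in>A. q i)" and qk: "0 \<le> q k" "q k \<le> 1"
    using insert by auto
  have S0: "0 \<le> (\<Sum>i\<in>A. 1 - q i)" using insert by (intro sum_nonneg) auto
  have "q k * (1 - (\<Sum>i\<in>A. 1 - q i)) \<le> q k * (\<Prod>i\<in>A. q i)"
    using IH qk by (simp add: mult_left_mono)
  moreover have "q k * (\<Sum>i\<in>A. 1 - q i) \<le> (\<Sum>i\<in>A. 1 - q i)"
    using qk S0 by (simp add: mult_left_le_one_le)
  ultimately show ?case using insert by (simp add: algebra_simps)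
qed simp

text \<open>For independent events of probabilities \<open>1 - q\<^sub>i\<close>: the probability that exactly one occurs
  is at most the probability that at least one occurs.\<close>

lemma sum_exactly_one_le_one_minus_prod:
  fixes q :: "'a \<Rightarrow> real"
  assumes "finite A" "\<And>i. i \<in> A \<Longrightarrow> 0 \<le> q i \<and> q i \<le> 1"
  shows "(\<Sum>i\<in>A. (1 - q i) * (\<Prod>j\<in>A - {i}. q j)) \<le> 1 - (\<Prod>i\<in>A. q i)"
  using assms
proof (induction A rule: finite_induct)
  case (insert k A)
  define E where "E = (\<Sum>i\<in>A. (1 - q i) * (\<Prod>j\<in>A - {i}. q j))"
  define P where "P = (\<Prod>i\<in>A. q i)"
  have IH: "E \<le> 1 - P" using insert unfolding E_def P_def by auto
  have qk: "0 \<le> q k" "q k \<le> 1" using insert by auto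
  have P1: "P \<le> 1" unfolding P_def using insert by (intro prod_le_1) auto
  have "(\<Sum>i\<in>A. (1 - q i) * (\<Prod>j\<in>insert k A - {i}. q j)) = q k * E"
    unfolding E_def sum_distrib_left
  proof (rule sum.cong)
    fix i assume "i \<in> A"
    then have "insert k A - {i} = insert k (A - {i})" using insert by auto
    then show "(1 - q i) * (\<Prod>j\<in>insert k A - {i}. q j) = q k * ((1 - q i) * (\<Prod>j\<in>A - {i}. q j))"
      using insert by simp
  qed simp
  moreover have "insert k A - {k} = A" using insert by auto
  ultimately have "(\<Sum>i\<in>insert k A. (1 - q i) * (\<Prod>j\<in>insert k A - {i}. q j)) = (1 - q k) * P + q k * E"
    using insert unfolding P_def by simp
  also have "\<dots> \<le> (1 - q k) * P + q k * (1 - P)" using IH qk by (simp add: mult_left_mono)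
  also have "\<dots> \<le> 1 - q k * P"
    using mult_nonneg_nonneg[of "1 - q k" "1 - P"] qk P1 by (simp add: algebra_simps)
  finally show ?case using insert unfolding P_def by simp
qed simp

lemma one_minus_inverse_power_bounds:
  assumes "n \<ge> (2::nat)"
  shows "(1 - 1 / real n) ^ (n - 1) \<le> 1/2" "1/3 \<le> (1 - 1 / real n) ^ (n - 1)"
proof -
  define m where "m = n - 1"
  have m1: "m \<ge> 1" and nm: "real n = real m + 1" using assms unfolding m_def by auto
  have pos: "0 < (1 + 1 / real m) ^ m" by (simp add: add_pos_nonneg)
  have "- 1 \<le> 1 / real m" by (simp add: order_trans[of _ 0])
  then have "1 + real m * (1 / real m) \<le> (1 + 1 / real m) ^ m" by (rule Bernoulli_inequality)
  then have lower: "2 \<le> (1 + 1 / real m) ^ m" using m1 by simp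
  have "(1 + 1 / real m) ^ m \<le> exp (1 / real m) ^ m"
    using exp_ge_add_one_self[of "1 / real m"] by (intro power_mono) (simp_all add: add.commute)
  also have "\<dots> = exp 1" using m1 by (simp flip: exp_of_nat_mult)
  also have "\<dots> \<le> 3" by (rule exp_le)
  finally have upper: "(1 + 1 / real m) ^ m \<le> 3" .
  have "1 - 1 / real n = 1 / (1 + 1 / real m)" using m1 nm by (simp add: field_simps)
  then have eq: "(1 - 1 / real n) ^ (n - 1) = 1 / (1 + 1 / real m) ^ m"
    unfolding m_def[symmetric] by (simp add: power_one_over)
  show "(1 - 1 / real n) ^ (n - 1) \<le> 1/2" unfolding eq using lower pos by (simp add: field_simps)
  show "1/3 \<le> (1 - 1 / real n) ^ (n - 1)" unfolding eq using upper pos by (simp add: field_simps)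
qed

lemma nbrs_eq: "nbrs n i = {..<n} - {i}"
  unfolding nbrs_def by auto

lemma equilibria_threshold:
  assumes "T \<in> equilibria n F p" "i < n"
  shows "T i = (if (\<Prod>j\<in>{..<n} - {i}. Fe F (T j)) = 0 then \<infinity>
                else ereal (p i / (\<Prod>j\<in>{..<n} - {i}. Fe F (T j))))"
  using assms unfolding equilibria_def nbrs_eq Let_def by blast

locale regular_distribution =
  fixes F f :: "real \<Rightarrow> real" and a :: real and b :: ereal
  assumes mono: "mono F"
    and cont: "continuous_on UNIV F"
    and tendsto_1: "(F \<longlongrightarrow> 1) at_top"
    and a_nonneg: "0 \<le> a"
    and below_support: "\<And>x. x \<le> a \<Longrightarrow> F x = 0"
    and above_support: "\<And>x. b \<le> ereal x \<Longrightarrow> F x = 1"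
    and density: "\<And>x. a < x \<Longrightarrow> ereal x < b \<Longrightarrow> (F has_real_derivative f x) (at x) \<and> f x > 0"
    and virtual_value_mono:
      "\<And>x y. a < x \<Longrightarrow> x \<le> y \<Longrightarrow> ereal y < b \<Longrightarrow> virtual_value F f x \<le> virtual_value F f y"

lemma regular_imp_regular_distribution:
  "regular F \<Longrightarrow> \<exists>f a b. regular_distribution F f a b"
  unfolding regular_def regular_distribution_def by blast

lemma has_real_derivative_revenue_shift:
  assumes "(F has_real_derivative f t) (at t)" "f t > 0"
  shows "((\<lambda>s. (1 - F s) * (c - s)) has_real_derivative f t * (virtual_value F f t - c)) (at t)"
proof -
  have "((\<lambda>s. (1 - F s) * (c - s)) has_real_derivative - f t * (c - t) + (1 - F t) * - 1) (at t)"
    by (auto intro!: derivative_eq_intros assms(1))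
  moreover have "- f t * (c - t) + (1 - F t) * - 1 = f t * (virtual_value F f t - c)"
    using assms(2) by (simp add: virtual_value_def field_simps)
  ultimately show ?thesis by simp
qed

context regular_distribution
begin

lemma F_le_1: "F x \<le> 1"
proof -
  have "eventually (\<lambda>z. F x \<le> F z) at_top"
    unfolding eventually_at_top_linorder using mono by (auto intro: monoD)
  then show ?thesis using tendsto_lowerbound[OF tendsto_1] by simp
qed

lemma F_nonneg: "0 \<le> F x"
  using below_support[of a] below_support[of x] monoD[OF mono, of a x] by (cases "x \<le> a") auto

lemma Fe_bounds: "0 \<le> Fe F t" "Fe F t \<le> 1"
  unfolding Fe_def using F_nonneg F_le_1 by auto

lemma inside_support:
  assumes "a < x" "x < y" "ereal y < b"
  shows "ereal x < b"
  using assms by (meson ereal_less_eq(3) le_less_trans less_imp_le)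

lemma strict_mono_on_support:
  assumes "a < x" "x < y" "ereal y < b"
  shows "F x < F y"
proof (rule DERIV_pos_imp_increasing_open[OF assms(2) _ continuous_on_subset[OF cont]])
  fix t assume "x < t" "t < y"
  then show "\<exists>d. (F has_real_derivative d) (at t) \<and> 0 < d"
    using density[of t] inside_support[of t y] assms by auto
qed simp

lemma Finv_quantile:
  assumes "0 < v" "v < 1"
  shows "F (Finv F v) = v" "a < Finv F v" "ereal (Finv F v) < b"
proof -
  obtain y0 where y0: "\<And>z. z \<ge> y0 \<Longrightarrow> F z > v"
    using order_tendstoD(1)[OF tendsto_1 assms(2)] unfolding eventually_at_top_linorder by blast
  have "\<exists>z. a \<le> z \<and> z \<le> max y0 a \<and> F z = v"
    by (rule IVT') (use below_support assms y0[of "max y0 a"] continuous_on_subset[OF cont] in auto)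
  then obtain z where z: "F z = v" by blast
  have in_support: "a < w \<and> ereal w < b" if "F w = v" for w
    using below_support[of w] above_support[of w] assms that by force
  have "Finv F v = z"
    unfolding Finv_def
  proof (rule Least_equality)
    show "z \<le> w" if "F w = v" for w
      using strict_mono_on_support[of w z] in_support[OF z] in_support[OF that] that z
      by (cases "w < z") auto
  qed (fact z)
  then show "F (Finv F v) = v" "a < Finv F v" "ereal (Finv F v) < b"
    using z in_support[OF z] by auto
qed

text \<open>The function \<open>s \<mapsto> (1 - F s)(c - s)\<close> with \<open>c = \<phi>(x)\<close> has derivative \<open>f(s)(\<phi>(s) - \<phi>(x))\<close>,
  so it is minimal at \<open>x\<close>: comparing with \<open>s = T\<close> and with \<open>s = a\<close> (where \<open>F = 0\<close>) yields the
  bound. The factor 2 pays for a negative \<open>\<phi>(x)\<close>, using \<open>1 - F x \<le> F x\<close>.\<close>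

lemma revenue_beyond_le_twice:
  assumes ax: "a < x" and xb: "ereal x < b" and half: "1 - F x \<le> F x" and xT: "x \<le> T"
  shows "T * (1 - F T) \<le> 2 * (x * (1 - F x))"
proof (cases "b \<le> ereal T")
  case True
  then show ?thesis using above_support[of T] ax a_nonneg F_le_1[of x] by simp
next
  case False
  then have Tb: "ereal T < b" by simp
  define c where "c = virtual_value F f x"
  define g where "g = (\<lambda>s. (1 - F s) * (c - s))"
  have g_cont: "continuous_on A g" for A
    unfolding g_def by (intro continuous_intros continuous_on_subset[OF cont]) auto
  have g_deriv: "(g has_real_derivative f t * (virtual_value F f t - c)) (at t) \<and> f t > 0"
    if "a < t" "ereal t < b" for t
    using has_real_derivative_revenue_shift[of F f t c] density[OF that] unfolding g_def by simp
  have "g x \<le> g T"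
  proof (rule DERIV_nonneg_imp_increasing_open[OF xT _ g_cont])
    fix t assume t: "x < t" "t < T"
    then have "a < t" "ereal t < b" using ax inside_support[of t T] Tb by auto
    moreover have "c \<le> virtual_value F f t"
      unfolding c_def using virtual_value_mono[of x t] ax t \<open>ereal t < b\<close> by simp
    ultimately show "\<exists>y. (g has_real_derivative y) (at t) \<and> 0 \<le> y" using g_deriv by fastforce
  qed
  then have right: "(1 - F T) * T \<le> (1 - F x) * x - c * (F T - F x)"
    unfolding g_def by (simp add: algebra_simps)
  have "g x \<le> g a"
  proof (rule DERIV_nonpos_imp_decreasing_open[OF _ _ g_cont])
    fix t assume t: "a < t" "t < x"
    then have "ereal t < b" using inside_support[of t x] xb by auto
    moreover have "virtual_value F f t \<le> c" unfolding c_def using virtual_value_mono t xb by auto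
    ultimately show "\<exists>y. (g has_real_derivative y) (at t) \<and> y \<le> 0"
      using g_deriv t by (fastforce simp: mult_le_0_iff)
  qed (use ax in simp)
  then have left: "- c * F x \<le> (1 - F x) * x"
    unfolding g_def using below_support[of a] a_nonneg by (simp add: algebra_simps)
  have FxT: "F x \<le> F T" using mono xT by (simp add: monoD)
  have "c * (F T - F x) \<ge> - (1 - F x) * x"
  proof (cases "c \<ge> 0")
    case True
    have "0 \<le> c * (F T - F x)" using True FxT by simp
    moreover have "0 \<le> (1 - F x) * x" using ax a_nonneg F_le_1[of x] by simp
    ultimately show ?thesis by linarith
  next
    case False
    then have "c * (1 - F x) \<le> c * (F T - F x)" using F_le_1[of T] by (simp add: mult_left_mono_neg)
    moreover have "c * F x \<le> c * (1 - F x)" using False half by (simp add: mult_left_mono_neg)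
    ultimately show ?thesis using left by linarith
  qed
  then show ?thesis using right by (simp add: algebra_simps)
qed

end

lemma uniform_price_revenue_ge:
  assumes mono: "mono F" and Fe_nonneg: "\<And>t. 0 \<le> Fe F t" and Fe_le_1: "\<And>t. Fe F t \<le> 1"
    and n: "n > 0" and p: "0 \<le> p" and px: "2 * p \<le> x" and Fx: "F x \<le> 1 - 1 / real n"
    and T: "T \<in> equilibria n F (\<lambda>_. p)"
  shows "p / 2 \<le> revenue n F (\<lambda>_. p) T"
proof -
  define q where "q i = Fe F (T i)" for i
  have q: "0 \<le> q i \<and> q i \<le> 1" for i unfolding q_def using Fe_nonneg Fe_le_1 by auto
  define \<Sigma> where "\<Sigma> = (\<Sum>i<n. 1 - q i)"
  have "\<Sigma> \<ge> 1/2"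
  proof (rule ccontr)
    assume small: "\<not> \<Sigma> \<ge> 1/2"
    have "1 / real n \<le> 1 - q i" if i: "i < n" for i
    proof -
      define D where "D = (\<Prod>j\<in>{..<n} - {i}. q j)"
      have "1 - (\<Sum>j\<in>{..<n} - {i}. 1 - q j) \<le> D"
        unfolding D_def by (rule one_minus_sum_le_prod) (use q in auto)
      moreover have "(\<Sum>j\<in>{..<n} - {i}. 1 - q j) \<le> \<Sigma>"
        unfolding \<Sigma>_def by (rule sum_mono2) (use q in auto)
      ultimately have D: "D > 1/2" using small by simp
      moreover have "T i = (if D = 0 then \<infinity> else ereal (p / D))"
        using equilibria_threshold[OF T i] unfolding D_def q_def .
      ultimately have "T i = ereal (p / D)" by simp
      moreover have "p / D \<le> x"
      proof -
        have "p / D \<le> p / (1/2)" using D p by (intro divide_left_mono) auto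
        then show ?thesis using px by simp
      qed
      ultimately have "q i \<le> F x" unfolding q_def Fe_def using mono by (simp add: monoD)
      then show ?thesis using Fx by simp
    qed
    then have "(\<Sum>i<n. 1 / real n) \<le> \<Sigma>" unfolding \<Sigma>_def by (intro sum_mono) auto
    then show False using small n by simp
  qed
  moreover have "revenue n F (\<lambda>_. p) T = p * \<Sigma>"
    unfolding revenue_def \<Sigma>_def q_def by (simp add: sum_distrib_left)
  ultimately show ?thesis using mult_left_mono[of "1/2" \<Sigma> p] p by simp
qed

lemma (in regular_distribution) equilibrium_revenue_le:
  assumes ax: "a < x" and xb: "ereal x < b" and half: "1 - F x \<le> F x"
    and T: "T \<in> equilibria n F p"
  shows "revenue n F p T \<le> x + 2 * real n * (x * (1 - F x))"
proof -
  define q where "q i = Fe F (T i)" for i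
  have q: "0 \<le> q i \<and> q i \<le> 1" for i unfolding q_def using Fe_bounds by auto
  define D where "D i = (\<Prod>j\<in>{..<n} - {i}. q j)" for i
  have D: "0 \<le> D i \<and> D i \<le> 1" for i unfolding D_def
    by (intro conjI prod_nonneg prod_le_1) (use q in blast)+
  have x0: "0 < x" using ax a_nonneg by simp
  have threshold: "T i = (if D i = 0 then \<infinity> else ereal (p i / D i))" if "i < n" for i
    using equilibria_threshold[OF T that] unfolding D_def q_def .
  have term_le: "p i * (1 - q i) \<le> x * ((1 - q i) * D i) + 2 * (x * (1 - F x))"
    if i: "i < n" for i
  proof -
    have R: "0 \<le> x * ((1 - q i) * D i)" "0 \<le> 2 * (x * (1 - F x))"
      using x0 q D F_le_1[of x] by simp_all
    show ?thesis
    proof (cases "D i = 0")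
      case True
      then have "q i = 1" using threshold[OF i] unfolding q_def Fe_def by simp
      then show ?thesis using R by simp
    next
      case False
      define t where "t = p i / D i"
      have qi: "q i = F t" and pi: "p i = t * D i"
        using threshold[OF i] False unfolding q_def t_def Fe_def by simp_all
      show ?thesis
      proof (cases "t \<le> x")
        case True
        have "p i * (1 - q i) = t * ((1 - F t) * D i)" unfolding pi qi by simp
        also have "\<dots> \<le> x * ((1 - F t) * D i)" using True F_le_1[of t] D by (intro mult_right_mono) auto
        finally show ?thesis using R qi by simp
      next
        case False
        have "p i * (1 - q i) = D i * (t * (1 - F t))" unfolding pi qi by simp
        also have "\<dots> \<le> t * (1 - F t)"
          using D False x0 F_le_1[of t] by (intro mult_left_le_one_le) auto
        also have "\<dots> \<le> 2 * (x * (1 - F x))"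
          using revenue_beyond_le_twice[OF ax xb half] False by simp
        finally show ?thesis using R by simp
      qed
    qed
  qed
  have "revenue n F p T = (\<Sum>i<n. p i * (1 - q i))" unfolding revenue_def q_def by simp
  also have "\<dots> \<le> (\<Sum>i<n. x * ((1 - q i) * D i) + 2 * (x * (1 - F x)))"
    by (intro sum_mono term_le) simp
  also have "\<dots> = x * (\<Sum>i<n. (1 - q i) * D i) + 2 * real n * (x * (1 - F x))"
    by (simp add: sum.distrib sum_distrib_left)
  also have "\<dots> \<le> x + 2 * real n * (x * (1 - F x))"
  proof -
    have "(\<Sum>i<n. (1 - q i) * D i) \<le> 1 - (\<Prod>i<n. q i)"
      unfolding D_def by (rule sum_exactly_one_le_one_minus_prod) (use q in auto)
    moreover have "0 \<le> (\<Prod>i<n. q i)" using q by (intro prod_nonneg) auto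
    ultimately show ?thesis using mult_left_mono[of _ 1 x] x0 by fastforce
  qed
  finally show ?thesis .
qed

theorem theorem3p1:
  "\<exists>c::real. c > 0 \<and>
    (\<forall>n::nat. \<forall>F::real \<Rightarrow> real. n \<ge> 2 \<and> regular F \<longrightarrow>
      (let p = Finv F (1 - 1 / real n) * (1 - 1 / real n) ^ (n - 1) in
        (INF T\<in>equilibria n F (\<lambda>_. p). ereal (revenue n F (\<lambda>_. p) T))
          \<ge> ereal c * (SUP p'\<in>{p'. \<forall>i<n. p' i > 0}.
                          SUP T\<in>equilibria n F p'. ereal (revenue n F p' T))))"
proof (intro exI[of _ "1/18"] conjI allI impI)
  fix n :: nat and F :: "real \<Rightarrow> real"
  assume "n \<ge> 2 \<and> regular F"
  then have n2: "n \<ge> 2" and "regular F" by auto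
  then obtain f a b where "regular_distribution F f a b"
    using regular_imp_regular_distribution by blast
  then interpret regular_distribution F f a b .
  define x where "x = Finv F (1 - 1 / real n)"
  define k where "k = (1 - 1 / real n) ^ (n - 1)"
  have k: "k \<le> 1/2" "1/3 \<le> k" using one_minus_inverse_power_bounds[OF n2] unfolding k_def by auto
  have v: "0 < 1 - 1 / real n" "1 - 1 / real n < 1" "1/2 \<le> 1 - 1 / real n"
    using n2 by (simp_all add: field_simps)
  note x = Finv_quantile[OF v(1,2), folded x_def]
  have x0: "0 < x" using x(2) a_nonneg by simp
  have half: "1 - F x \<le> F x" using x(1) v(3) by simp
  have "revenue n F p' T \<le> 3 * x" if "T \<in> equilibria n F p'" for p' T
    using equilibrium_revenue_le[OF x(2,3) half that] x(1) n2 by simp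
  then have "(SUP p'\<in>{p'. \<forall>i<n. p' i > 0}. SUP T\<in>equilibria n F p'. ereal (revenue n F p' T))
      \<le> ereal (3 * x)"
    by (intro SUP_least) simp
  then have "ereal (1/18) * (SUP p'\<in>{p'. \<forall>i<n. p' i > 0}. SUP T\<in>equilibria n F p'. ereal (revenue n F p' T))
      \<le> ereal (1/18) * ereal (3 * x)"
    by (rule ereal_mult_left_mono) simp
  also have "\<dots> \<le> ereal (x * k / 2)" using k x0 by simp
  also have "\<dots> \<le> (INF T\<in>equilibria n F (\<lambda>_. x * k). ereal (revenue n F (\<lambda>_. x * k) T))"
    using uniform_price_revenue_ge[OF mono Fe_bounds, of n "x * k" x] k x0 x(1) n2
    by (intro INF_greatest) simp
  finally show "(let p = Finv F (1 - 1 / real n) * (1 - 1 / real n) ^ (n - 1) in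
        (INF T\<in>equilibria n F (\<lambda>_. p). ereal (revenue n F (\<lambda>_. p) T))
          \<ge> ereal (1/18) * (SUP p'\<in>{p'. \<forall>i<n. p' i > 0}.
                          SUP T\<in>equilibria n F p'. ereal (revenue n F p' T)))"
    unfolding x_def[symmetric] k_def[symmetric] Let_def .
qed simp

end
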